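(* In the Setting below and under the Standing Assumption, let $x\in\mathbb{Q}\cap D$ be such that the Lyapunov exponent $\lambda(x)$ exists. Then for every $\varepsilon>0$ there exists $p_0\in\mathbb{Z}$ such that for all $p\ge p_0$, $$\sigma(x,p)\le\frac{1}{\ln 2}\max(0,\bar\lambda(x))+\varepsilon.$$
   Context: Setting. $D\subseteq\mathbb{R}$ is a compact interval and $f:D\to D$ is twice continuously differentiable on $D$ with $f''$ bounded. For $x\in D$ the orbit is $x_0=x$, $x_{n+1}=f(x_n)$. A floating-point number of precision $m$ is a real $s\cdot 2^{e-m}$ with $s,e\in\mathbb{Z}$, $|s|\le 2^m-1$; $rd_m(y)$ denotes rounding of $y$ to a nearest floating-point number of precision $m$. Let $L(a,e):=\sup\{|f'(y)|: y\in[a-e,a+e]\cap D\}$ and fix a function $\bar L$ with $L(a,e)\le\bar L(a,e)\le\min(\bar L_{max},\,L(a,e)+Ke)$ for constants $\bar L_{max},K\ge0$. For $x\in\mathbb{Q}\cap D$ and precision $m\ge1$ the computed sequence is $\hat x_0=rd_m(x)$, $\bar e_0=2^{-m}|\hat x_0|$, $\hat x_{n+1}=rd_m(f(\hat x_n))$, $\bar e_{n+1}=\bar L(\hat x_n,\bar e_n)\bar e_n+2^{-m}|\hat x_{n+1}|$ (all $\hat x_n$ assumed in $D$). For $N\in\mathbb{N}$, $p\in\mathbb{Z}$, $m_{min}(x,N,p)$ is the least $m\ge1$ such that the sequence computed at precision $m$ satisfies $\bar e_n\le\frac{10^{-p}}{1+10^{-p}}|\hat x_n|$ for all $n=0,\dots,N$.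 $\sigma(x,p):=\limsup_{N\to\infty} m_{min}(x,N,p)/N$. Standing Assumption: $x_n\ne0$ for all $n$ and $\lim_{N\to\infty}\mathrm{ld}(\min\{|x_n|:0\le n\le N\})/N=0$, $\mathrm{ld}=\log_2$. Lyapunov exponent: $\lambda(x):=\lim_{n\to\infty}\frac1n\sum_{k=0}^{n-1}\ln|f'(f^k(x))|$ when it exists. For $\alpha>0$, $\eta_\alpha(y)=\ln y$ if $y\ge\alpha$, $\eta_\alpha(y)=\ln\alpha$ if $0\le y<\alpha$; $\bar\lambda_\alpha(x):=\limsup_{n\to\infty}\frac1n\sum_{k=0}^{n-1}\eta_\alpha(|f'(f^k(x))|)$ and $\bar\lambda(x):=\lim_{\alpha\to0^+}\bar\lambda_\alpha(x)$. *)

theory Defs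
  imports "HOL-Analysis.Analysis" "HOL-Library.Liminf_Limsup"
begin

definition is_float :: "nat \<Rightarrow> real \<Rightarrow> bool" where
  "is_float m y \<longleftrightarrow> (\<exists>s e :: int. \<bar>s\<bar> \<le> 2 ^ m - 1 \<and>
      y = real_of_int s * 2 powr (real_of_int e - real m))"

definition is_round_nearest :: "(nat \<Rightarrow> real \<Rightarrow> real) \<Rightarrow> bool" where
  "is_round_nearest rd \<longleftrightarrow> (\<forall>m\<ge>1. \<forall>y. is_float m (rd m y) \<and>
      (\<forall>z. is_float m z \<longrightarrow> \<bar>rd m y - y\<bar> \<le> \<bar>z - y\<bar>))"

definition Lloc :: "(real \<Rightarrow> real) \<Rightarrow> real set \<Rightarrow> real \<Rightarrow> real \<Rightarrow> real" where
  "Lloc f' D a e = Sup ((\<lambda>y. \<bar>f' y\<bar>) ` ({a - e .. a + e} \<inter> D))"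

text \<open>Computed sequence (xhat n, ebar n) at precision m.\<close>
primrec comp_seq :: "(nat \<Rightarrow> real \<Rightarrow> real) \<Rightarrow> (real \<Rightarrow> real) \<Rightarrow> (real \<Rightarrow> real \<Rightarrow> real)
     \<Rightarrow> nat \<Rightarrow> real \<Rightarrow> nat \<Rightarrow> real \<times> real" where
  "comp_seq rd f Lb m x 0 = (rd m x, inverse (2 ^ m) * \<bar>rd m x\<bar>)"
| "comp_seq rd f Lb m x (Suc n) =
     (let xh = fst (comp_seq rd f Lb m x n); e = snd (comp_seq rd f Lb m x n);
          xh' = rd m (f xh)
      in (xh', Lb xh e * e + inverse (2 ^ m) * \<bar>xh'\<bar>))"

definition m_min :: "(nat \<Rightarrow> real \<Rightarrow> real) \<Rightarrow> (real \<Rightarrow> real) \<Rightarrow> (real \<Rightarrow> real \<Rightarrow> real)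
     \<Rightarrow> real \<Rightarrow> nat \<Rightarrow> int \<Rightarrow> nat" where
  "m_min rd f Lb x N p = (LEAST m. m \<ge> 1 \<and> (\<forall>n\<le>N.
      snd (comp_seq rd f Lb m x n) \<le>
        10 powr (- real_of_int p) / (1 + 10 powr (- real_of_int p)) * \<bar>fst (comp_seq rd f Lb m x n)\<bar>))"

definition sigma :: "(nat \<Rightarrow> real \<Rightarrow> real) \<Rightarrow> (real \<Rightarrow> real) \<Rightarrow> (real \<Rightarrow> real \<Rightarrow> real)
     \<Rightarrow> real \<Rightarrow> int \<Rightarrow> ereal" where
  "sigma rd f Lb x p = limsup (\<lambda>N. ereal (real (m_min rd f Lb x N p) / real N))"

definition eta :: "real \<Rightarrow> real \<Rightarrow> real" where
  "eta \<alpha> y = (if y \<ge> \<alpha> then ln y else ln \<alpha>)"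

definition lambda_bar_alpha :: "(real \<Rightarrow> real) \<Rightarrow> (real \<Rightarrow> real) \<Rightarrow> real \<Rightarrow> real \<Rightarrow> ereal" where
  "lambda_bar_alpha f f' x \<alpha> =
     limsup (\<lambda>n. ereal ((1 / real n) * (\<Sum>k<n. eta \<alpha> \<bar>f' ((f ^^ k) x)\<bar>)))"

definition lambda_bar :: "(real \<Rightarrow> real) \<Rightarrow> (real \<Rightarrow> real) \<Rightarrow> real \<Rightarrow> ereal" where
  "lambda_bar f f' x = Lim (at_right 0) (\<lambda>\<alpha>. lambda_bar_alpha f f' x \<alpha>)"

text \<open>The Lyapunov exponent exists (as a real number): all logarithms are defined and the averages converge.\<close>
definition lyapunov_exists :: "(real \<Rightarrow> real) \<Rightarrow> (real \<Rightarrow> real) \<Rightarrow> real \<Rightarrow> bool" where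
  "lyapunov_exists f f' x \<longleftrightarrow> (\<forall>k. f' ((f ^^ k) x) \<noteq> 0) \<and>
     (\<exists>l. (\<lambda>n. (1 / real n) * (\<Sum>k<n. ln \<bar>f' ((f ^^ k) x)\<bar>)) \<longlonglongrightarrow> l)"

end

theory Submission
  imports Defs "HOL-Real_Asymp.Real_Asymp"
begin

text \<open>
  At precision m the computed bound ebar_n encloses the true error of the computed orbit and
  satisfies ebar_(n+1) \<le> (|f'(x_n)| + C ebar_n) ebar_n + 2^-m R.  While ebar_n stays below a
  threshold this is a linear recursion, bounded by 2^-m R (N + 1) exp B, where B bounds the sums
  of the logarithmic growth factors over windows [k, n) of the orbit (bootstrap_bound).  If the
  Lyapunov exponent is negative, window sums of ln |f'| are sublinear, so precision of order
  q N suffices for every q > 0.  Otherwise the factors are replaced by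
  max(|f'|, alpha) (1 + eps), which absorbs the quadratic term once the tolerance 10^-p is small,
  and window sums of eta_alpha grow at most like N times lambda_bar_alpha; this gives precision of
  order N (max(0, lambda_bar) + eps) / ln 2.  The acceptance test defining m_min holds once
  ebar_n \<le> tol(p) min_n |x_n| / 2, which turns these estimates into bounds on sigma.
\<close>

lemma is_float_signed_pow2:
  assumes m: "m \<ge> 1" and s: "\<bar>s\<bar> \<le> 1"
  shows "is_float m (of_int s * 2 powr of_int k)"
proof -
  obtain j where j: "m = Suc j" using m by (cases m) auto
  have "\<bar>s * 2 ^ j\<bar> \<le> 2 ^ m - 1"
  proof -
    have "\<bar>s * 2 ^ j\<bar> \<le> 2 ^ j" using s by (simp add: abs_mult)
    moreover have "(0::int) < 2 ^ j" by simp
    ultimately have "\<bar>s * 2 ^ j\<bar> < 2 * 2 ^ j" by linarith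
    then show ?thesis using j by simp
  qed
  moreover have "of_int s * 2 powr of_int k = real_of_int (s * 2 ^ j) * 2 powr (real_of_int (k + 1) - real m)"
  proof -
    have "2 powr (real_of_int (k + 1) - real m) * 2 ^ j = 2 powr (real_of_int (k + 1) - real m + real j)"
      by (simp add: powr_add powr_realpow)
    then show ?thesis using j by (simp add: algebra_simps)
  qed
  ultimately show ?thesis unfolding is_float_def by blast
qed

text \<open>Below 2^k the floats of precision m contain the grid of spacing 2^(k-m), so every such
  real has a float within half a grid step.\<close>

lemma is_float_grid_point:
  assumes m: "m \<ge> 1" and y: "\<bar>y\<bar> < 2 powr of_int k"
  shows "\<exists>w. is_float m w \<and> \<bar>w - y\<bar> \<le> 2 powr (of_int k - real m) / 2"
proof -
  define H where "H = 2 powr (of_int k - real m)"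
  have H: "H > 0" unfolding H_def by simp
  have Hk: "2 powr of_int k = H * 2 ^ m"
  proof -
    have "(2::real) ^ m = 2 powr real m" by (simp add: powr_realpow)
    then have "H * 2 ^ m = 2 powr (of_int k - real m + real m)"
      unfolding H_def by (simp add: powr_add[symmetric])
    then show ?thesis by simp
  qed
  define s where "s = round (y / H)"
  have s_close: "\<bar>of_int s - y / H\<bar> \<le> 1 / 2" unfolding s_def by (rule of_int_round_abs_le)
  have close: "\<bar>of_int s * H - y\<bar> \<le> H / 2"
  proof -
    have "of_int s * H - y = H * (of_int s - y / H)" using H by (simp add: field_simps)
    then show ?thesis using s_close H by (simp add: abs_mult)
  qed
  have "\<bar>y / H\<bar> < 2 ^ m" using y Hk H by (simp add: divide_less_eq abs_divide mult.commute)
  then have "\<bar>real_of_int s\<bar> < 2 ^ m + 1" using s_close by linarith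
  then have "real_of_int \<bar>s\<bar> < real_of_int (2 ^ m + 1)" by simp
  then have s_le: "\<bar>s\<bar> \<le> 2 ^ m" by (simp only: of_int_less_iff)
  show ?thesis
  proof (cases "\<bar>s\<bar> \<le> 2 ^ m - 1")
    case True
    then show ?thesis using close unfolding is_float_def H_def by blast
  next
    case False
    then have "\<bar>s\<bar> = 2 ^ m" using s_le by linarith
    then have "s = 2 ^ m \<or> s = - (2 ^ m)" by linarith
    then have "real_of_int s = of_int (sgn s) * 2 ^ m" by auto
    then have "of_int s * H = of_int (sgn s) * 2 powr of_int k" using Hk by simp
    moreover have "\<bar>sgn s\<bar> \<le> 1" by (simp add: abs_sgn_eq)
    ultimately show ?thesis using close is_float_signed_pow2[OF m] unfolding H_def by metis
  qed
qed

lemma round_nearest_rel_error: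
  assumes rd: "is_round_nearest rd" and m: "m \<ge> 1"
  shows "\<bar>rd m y - y\<bar> \<le> inverse (2 ^ m) * \<bar>rd m y\<bar>"
proof -
  have nearest: "\<And>z. is_float m z \<Longrightarrow> \<bar>rd m y - y\<bar> \<le> \<bar>z - y\<bar>"
    using rd m unfolding is_round_nearest_def by auto
  show ?thesis
  proof (cases "y = 0")
    case True
    have "is_float m 0" unfolding is_float_def by (rule exI[of _ 0]) simp
    from nearest[OF this] True show ?thesis by simp
  next
    case False
    define k where "k = \<lfloor>log 2 \<bar>y\<bar>\<rfloor> + 1"
    have lo: "2 powr of_int (k - 1) \<le> \<bar>y\<bar>"
      using False powr_mono[of "of_int (k - 1)" "log 2 \<bar>y\<bar>" 2] unfolding k_def by simp
    have hi: "\<bar>y\<bar> < 2 powr of_int k"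
      using False powr_less_mono[of "log 2 \<bar>y\<bar>" "of_int k" 2] unfolding k_def by simp
    (* the nearest grid float bounds the error by half a grid step ... *)
    obtain w where w: "is_float m w" "\<bar>w - y\<bar> \<le> 2 powr (of_int k - real m) / 2"
      using is_float_grid_point[OF m hi] by blast
    have "2 powr (of_int k - real m) / 2 = inverse (2 ^ m) * 2 powr of_int (k - 1)"
    proof -
      have "2 powr (of_int k - real m) = 2 powr of_int k / 2 ^ m" by (simp add: powr_diff powr_realpow)
      moreover have "(2::real) powr of_int (k - 1) = 2 powr of_int k / 2" by (simp add: powr_diff)
      ultimately show ?thesis by (simp add: field_simps)
    qed
    then have near: "\<bar>rd m y - y\<bar> \<le> inverse (2 ^ m) * 2 powr of_int (k - 1)"
      using nearest[OF w(1)] w(2) by linarith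
    (* ... and the float sgn y * 2^(k-1) below y forces |rd y| \<ge> 2^(k-1) *)
    define v where "v = (if y > 0 then 1 else -1 :: int)"
    have v: "\<bar>v\<bar> \<le> 1" by (simp add: v_def)
    have "\<bar>of_int v * 2 powr of_int (k - 1) - y\<bar> = \<bar>y\<bar> - 2 powr of_int (k - 1)"
      using lo by (auto simp: v_def abs_if)
    then have "\<bar>rd m y - y\<bar> \<le> \<bar>y\<bar> - 2 powr of_int (k - 1)"
      using nearest[OF is_float_signed_pow2[OF m v, of "k - 1"]] by linarith
    then have "2 powr of_int (k - 1) \<le> \<bar>rd m y\<bar>" by linarith
    then have "inverse (2 ^ m) * 2 powr of_int (k - 1) \<le> inverse (2 ^ m) * \<bar>rd m y\<bar>"
      by (intro mult_left_mono) auto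
    then show ?thesis using near by linarith
  qed
qed

lemma linear_recursion_bound:
  fixes E g :: "nat \<Rightarrow> real" and c :: real
  assumes step: "\<And>j. j < n \<Longrightarrow> E (Suc j) \<le> g j * E j + c" and start: "E 0 \<le> c"
    and g: "\<And>j. g j \<ge> 0" and c: "c \<ge> 0"
  shows "E n \<le> c * (\<Sum>k\<le>n. \<Prod>j\<in>{k..<n}. g j)"
  using step
proof (induction n)
  case 0
  then show ?case using start by simp
next
  case (Suc n)
  have "E (Suc n) \<le> g n * E n + c" using Suc.prems by simp
  also have "\<dots> \<le> g n * (c * (\<Sum>k\<le>n. \<Prod>j\<in>{k..<n}. g j)) + c"
    using Suc g by (intro add_right_mono mult_left_mono) auto
  also have "\<dots> = c * ((\<Sum>k\<le>n. (\<Prod>j\<in>{k..<n}. g j) * g n) + 1)"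
    by (simp add: sum_distrib_left sum_distrib_right algebra_simps)
  also have "(\<Sum>k\<le>n. (\<Prod>j\<in>{k..<n}. g j) * g n) = (\<Sum>k\<le>n. \<Prod>j\<in>{k..<Suc n}. g j)"
    by (intro sum.cong refl) (simp add: prod.atLeastLessThan_Suc)
  also have "(\<Sum>k\<le>n. \<Prod>j\<in>{k..<Suc n}. g j) + 1 = (\<Sum>k\<le>Suc n. \<Prod>j\<in>{k..<Suc n}. g j)"
    by simp
  finally show ?case .
qed

lemma bootstrap_bound:
  fixes E h :: "nat \<Rightarrow> real" and c \<beta> B :: real and N :: nat
  assumes start: "E 0 \<le> c" and nonneg: "\<And>j. E j \<ge> 0"
    and step: "\<And>j. j < N \<Longrightarrow> E j \<le> \<beta> \<Longrightarrow> E (Suc j) \<le> h j * E j + c"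
    and h: "\<And>j. h j > 0"
    and window: "\<And>k n. k \<le> n \<Longrightarrow> n \<le> N \<Longrightarrow> (\<Sum>j\<in>{k..<n}. ln (h j)) \<le> B"
    and budget: "c * (real N + 1) * exp B \<le> \<beta>"
  shows "\<And>n. n \<le> N \<Longrightarrow> E n \<le> \<beta>"
proof -
  fix n assume "n \<le> N"
  then show "E n \<le> \<beta>"
  proof (induction n rule: less_induct)
    case (less n)
    have c: "c \<ge> 0" using start nonneg[of 0] by linarith
    have "E n \<le> c * (\<Sum>k\<le>n. \<Prod>j\<in>{k..<n}. h j)"
      using step less h start c by (intro linear_recursion_bound) (auto intro: less_imp_le)
    also have "(\<Sum>k\<le>n. \<Prod>j\<in>{k..<n}. h j) \<le> (\<Sum>k\<le>n. exp B)"
    proof (rule sum_mono)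
      fix k assume "k \<in> {..n}"
      have "(\<Prod>j\<in>{k..<n}. h j) = exp (\<Sum>j\<in>{k..<n}. ln (h j))"
        using h by (simp add: exp_sum)
      also have "\<dots> \<le> exp B" using window \<open>k \<in> {..n}\<close> less.prems by simp
      finally show "(\<Prod>j\<in>{k..<n}. h j) \<le> exp B" .
    qed
    also have "(\<Sum>k\<le>n. exp B) \<le> (real N + 1) * exp B"
      using less.prems by (simp add: mult_right_mono)
    finally have "E n \<le> c * ((real N + 1) * exp B)" using c by (simp add: mult_left_mono)
    then show ?case using budget by (simp add: mult.assoc)
  qed
qed

lemma eventually_le_imp_offset:
  fixes u v :: "nat \<Rightarrow> real"
  assumes "eventually (\<lambda>n. u n \<le> v n) sequentially"
  shows "\<exists>K\<ge>0. \<forall>n. u n \<le> v n + K"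
proof -
  obtain n0 where n0: "\<And>n. n \<ge> n0 \<Longrightarrow> u n \<le> v n"
    using assms unfolding eventually_sequentially by blast
  define K where "K = (\<Sum>i<n0. \<bar>u i - v i\<bar>)"
  have K: "K \<ge> 0" unfolding K_def by (intro sum_nonneg) auto
  have "u n \<le> v n + K" for n
  proof (cases "n \<ge> n0")
    case True
    then show ?thesis using n0 K by force
  next
    case False
    then have "\<bar>u n - v n\<bar> \<le> K" unfolding K_def by (intro member_le_sum) auto
    then show ?thesis by linarith
  qed
  then show ?thesis using K by blast
qed

lemma average_limit_linear_bounds:
  fixes S :: "nat \<Rightarrow> real"
  assumes lim: "(\<lambda>n. (1 / real n) * S n) \<longlonglongrightarrow> l" and \<epsilon>: "\<epsilon> > 0"
  shows "\<exists>K\<ge>0. \<forall>n. real n * (l - \<epsilon>) - K \<le> S n \<and> S n \<le> real n * (l + \<epsilon>) + K"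
proof -
  have close: "\<forall>\<^sub>F n in sequentially. \<bar>S n / real n - l\<bar> < \<epsilon> \<and> n \<ge> 1"
    using lim \<epsilon> unfolding tendsto_iff dist_real_def
    by (intro eventually_conj) (auto simp: eventually_sequentially)
  have "\<forall>\<^sub>F n in sequentially. S n \<le> real n * (l + \<epsilon>)"
    by (rule eventually_mono[OF close]) (auto simp: abs_less_iff field_simps)
  from eventually_le_imp_offset[OF this]
  obtain K1 where K1: "K1 \<ge> 0" "\<forall>n. S n \<le> real n * (l + \<epsilon>) + K1" by blast
  have "\<forall>\<^sub>F n in sequentially. real n * (l - \<epsilon>) \<le> S n"
    by (rule eventually_mono[OF close]) (auto simp: abs_less_iff field_simps)
  from eventually_le_imp_offset[OF this]
  obtain K2 where K2: "K2 \<ge> 0" "\<forall>n. real n * (l - \<epsilon>) \<le> S n + K2" by blast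
  have "real n * (l - \<epsilon>) - (K1 + K2) \<le> S n \<and> S n \<le> real n * (l + \<epsilon>) + (K1 + K2)" for n
    using K1(1) K1(2)[rule_format, of n] K2(1) K2(2)[rule_format, of n] by linarith
  then show ?thesis using K1(1) K2(1) by (intro exI[of _ "K1 + K2"]) auto
qed

lemma limsup_average_linear_bound:
  fixes T :: "nat \<Rightarrow> real"
  assumes "limsup (\<lambda>n. ereal ((1 / real n) * T n)) < ereal r"
  shows "\<exists>K\<ge>0. \<forall>n. T n \<le> real n * r + K"
proof (rule eventually_le_imp_offset)
  have "\<forall>\<^sub>F n in sequentially. ereal ((1 / real n) * T n) < ereal r \<and> n \<ge> 1"
    using Limsup_lessD[OF assms] by (intro eventually_conj) (auto simp: eventually_sequentially)
  then show "\<forall>\<^sub>F n in sequentially. T n \<le> real n * r"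
    by (rule eventually_mono) (auto simp: field_simps)
qed

lemma eventually_linear_le_exp:
  fixes c d :: real
  assumes "d > 0"
  shows "\<forall>\<^sub>F N in sequentially. c * (real N + 1) \<le> exp (d * real N)"
  using assms by real_asymp

text \<open>Exponential bookkeeping for the expanding case: the precision gain exp (- N (r + 4 eps))
  beats the error growth exp (N (r + 2 eps)), the linear factor and the loss in orbit_min.\<close>

lemma expanding_budget:
  fixes u R K0 K1 r \<epsilon> \<tau> \<mu> :: real and N :: nat
  assumes u: "u \<le> exp (- (real N * (r + 4 * \<epsilon>)))" and R: "R \<ge> 0" and \<tau>: "\<tau> > 0"
    and large: "2 * R * exp (K0 + K1) / \<tau> * (real N + 1) \<le> exp (\<epsilon> * real N)"
    and \<mu>: "exp (- (\<epsilon> * real N)) \<le> \<mu>"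
  shows "u * R * (real N + 1) * exp (real N * (r + \<epsilon>) + K0 + K1 + real N * \<epsilon>) \<le> \<tau> * \<mu> / 2"
proof -
  have large': "R * exp (K0 + K1) * (real N + 1) \<le> \<tau> / 2 * exp (\<epsilon> * real N)"
    using large \<tau> by (simp add: field_simps)
  have "u * R * (real N + 1) * exp (real N * (r + \<epsilon>) + K0 + K1 + real N * \<epsilon>)
      \<le> exp (- (real N * (r + 4 * \<epsilon>))) * R * (real N + 1) * exp (real N * (r + \<epsilon>) + K0 + K1 + real N * \<epsilon>)"
    using u R by (intro mult_right_mono) auto
  also have "\<dots> = R * exp (K0 + K1) * (real N + 1) * exp (- (2 * \<epsilon> * real N))"
  proof -
    have "- (real N * (r + 4 * \<epsilon>)) + (real N * (r + \<epsilon>) + K0 + K1 + real N * \<epsilon>)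
        = (K0 + K1) + - (2 * \<epsilon> * real N)" by (simp add: algebra_simps)
    then have "exp (- (real N * (r + 4 * \<epsilon>))) * exp (real N * (r + \<epsilon>) + K0 + K1 + real N * \<epsilon>)
        = exp (K0 + K1) * exp (- (2 * \<epsilon> * real N))" by (simp only: mult_exp_exp)
    then show ?thesis by (simp add: ac_simps)
  qed
  also have "\<dots> \<le> \<tau> / 2 * exp (\<epsilon> * real N) * exp (- (2 * \<epsilon> * real N))"
    using large' by (rule mult_right_mono) simp
  also have "\<dots> = \<tau> / 2 * exp (- (\<epsilon> * real N))"
    by (simp add: mult.assoc mult_exp_exp)
  also have "\<dots> \<le> \<tau> / 2 * \<mu>" using \<mu> \<tau> by simp
  finally show ?thesis by simp
qed

lemma inverse_pow2_ceiling_le: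
  "inverse (2 ^ nat \<lceil>t\<rceil> :: real) \<le> exp (- (t * ln 2))"
proof -
  have "(2::real) ^ nat \<lceil>t\<rceil> = exp (real (nat \<lceil>t\<rceil>) * ln 2)" by (simp add: exp_of_nat_mult)
  then have "inverse ((2::real) ^ nat \<lceil>t\<rceil>) = exp (- (real (nat \<lceil>t\<rceil>) * ln 2))" by (simp add: exp_minus)
  also have "\<dots> \<le> exp (- (t * ln 2))" by simp linarith
  finally show ?thesis .
qed

lemma sum_window_eq:
  fixes s :: "nat \<Rightarrow> real"
  assumes "k \<le> n"
  shows "(\<Sum>j\<in>{k..<n}. s j) = (\<Sum>j<n. s j) - (\<Sum>j<k. s j)"
  using sum_diff_nat_ivl[of 0 k n s] assms by (simp add: atLeast0LessThan)

lemma window_sum_le_of_nonpositive_rate: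
  fixes s :: "nat \<Rightarrow> real"
  assumes l: "l \<le> 0" and \<delta>: "\<delta> \<ge> 0"
    and bounds: "\<forall>n. real n * (l - \<delta>) - K \<le> (\<Sum>j<n. s j) \<and> (\<Sum>j<n. s j) \<le> real n * (l + \<delta>) + K"
    and kn: "k \<le> n" "n \<le> N"
  shows "(\<Sum>j\<in>{k..<n}. s j) \<le> 2 * \<delta> * real N + 2 * K"
proof -
  have "real n * l \<le> real k * l" using l kn by (intro mult_right_mono_neg) auto
  moreover have "real n * \<delta> \<le> real N * \<delta>" "real k * \<delta> \<le> real N * \<delta>"
    using \<delta> kn by (auto intro: mult_right_mono)
  ultimately show ?thesis
    using sum_window_eq[OF kn(1), of s] bounds[rule_format, of n] bounds[rule_format, of k]
    by (simp add: algebra_simps)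
qed

lemma window_sum_le_of_dominating:
  fixes s t :: "nat \<Rightarrow> real"
  assumes st: "\<And>j. s j \<le> t j" and r: "r \<ge> 0" and \<epsilon>: "\<epsilon> \<ge> 0"
    and upper: "\<forall>n. (\<Sum>j<n. t j) \<le> real n * r + K0"
    and lower: "\<forall>k. - K1 - real k * \<epsilon> \<le> (\<Sum>j<k. s j)"
    and kn: "k \<le> n" "n \<le> N"
  shows "(\<Sum>j\<in>{k..<n}. t j) \<le> real N * (r + \<epsilon>) + K0 + K1"
proof -
  have "(\<Sum>j<k. s j) \<le> (\<Sum>j<k. t j)" using st by (intro sum_mono)
  moreover have "real n * r \<le> real N * r" "real k * \<epsilon> \<le> real N * \<epsilon>"
    using kn r \<epsilon> by (auto intro: mult_right_mono)
  ultimately show ?thesis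
    using sum_window_eq[OF kn(1), of t] upper[rule_format, of n] lower[rule_format, of k]
    by (simp add: algebra_simps)
qed

text \<open>The smallest modulus of the first N + 1 orbit points; the acceptance test is relative, so
  errors have to be compared with it.\<close>

definition orbit_min :: "(real \<Rightarrow> real) \<Rightarrow> real \<Rightarrow> nat \<Rightarrow> real" where
  "orbit_min f x N = Min ((\<lambda>n. \<bar>(f ^^ n) x\<bar>) ` {0..N})"

lemma orbit_min_le: "n \<le> N \<Longrightarrow> orbit_min f x N \<le> \<bar>(f ^^ n) x\<bar>"
  unfolding orbit_min_def by (intro Min_le) auto

lemma orbit_min_pos:
  assumes "\<forall>n. (f ^^ n) x \<noteq> 0" shows "orbit_min f x N > 0"
  unfolding orbit_min_def using assms by (subst Min_gr_iff) auto

lemma orbit_min_eventually_ge: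
  assumes nz: "\<forall>n. (f ^^ n) x \<noteq> 0"
    and rate: "(\<lambda>N. log 2 (orbit_min f x N) / real N) \<longlonglongrightarrow> 0" and \<delta>: "\<delta> > 0"
  shows "\<forall>\<^sub>F N in sequentially. exp (- (\<delta> * real N)) \<le> orbit_min f x N"
proof -
  have "\<forall>\<^sub>F N in sequentially. \<bar>log 2 (orbit_min f x N) / real N\<bar> < \<delta> / ln 2 \<and> N \<ge> 1"
    using rate \<delta> unfolding tendsto_iff dist_real_def
    by (intro eventually_conj) (auto simp: eventually_sequentially)
  then show ?thesis
  proof (rule eventually_mono, elim conjE)
    fix N :: nat assume close: "\<bar>log 2 (orbit_min f x N) / real N\<bar> < \<delta> / ln 2" and N: "N \<ge> 1"
    have pos: "orbit_min f x N > 0" using orbit_min_pos[OF nz] .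
    let ?L = "log 2 (orbit_min f x N)"
    have "\<bar>?L\<bar> < \<delta> * real N / ln 2"
      using close N by (simp add: abs_divide pos_divide_less_eq mult.commute)
    then have "ln 2 * \<bar>?L\<bar> < \<delta> * real N" by (simp add: pos_less_divide_eq mult.commute)
    moreover have "ln 2 * (- \<bar>?L\<bar>) \<le> ln 2 * ?L" by (intro mult_left_mono) auto
    moreover have "ln (orbit_min f x N) = ln 2 * ?L" by (simp add: log_def)
    ultimately have "- (\<delta> * real N) < ln (orbit_min f x N)" by linarith
    then have "exp (- (\<delta> * real N)) < exp (ln (orbit_min f x N))" by (simp only: exp_less_cancel_iff)
    then show "exp (- (\<delta> * real N)) \<le> orbit_min f x N" using pos by simp
  qed
qed

definition tolerance :: "int \<Rightarrow> real" where
  "tolerance p = 10 powr (- real_of_int p) / (1 + 10 powr (- real_of_int p))"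

lemma tolerance_pos: "tolerance p > 0"
  unfolding tolerance_def by (simp add: add_pos_pos)

lemma tolerance_le_one: "tolerance p \<le> 1"
  unfolding tolerance_def by (simp add: add_pos_pos divide_le_eq)

lemma tolerance_eventually_le:
  assumes "\<delta> > 0"
  shows "\<exists>p0. \<forall>p\<ge>p0. tolerance p \<le> \<delta>"
proof (intro exI allI impI)
  fix p :: int assume p: "p \<ge> \<lceil>- log 10 \<delta>\<rceil>"
  have "tolerance p \<le> 10 powr (- real_of_int p)"
    unfolding tolerance_def by (simp add: divide_le_eq add_pos_pos)
  also have "\<dots> \<le> 10 powr (log 10 \<delta>)" using p by (intro powr_mono) linarith+
  also have "\<dots> = \<delta>" using assms by simp
  finally show "tolerance p \<le> \<delta>" .
qed

lemma eta_eq_ln_max: "\<alpha> > 0 \<Longrightarrow> y \<ge> 0 \<Longrightarrow> eta \<alpha> y = ln (max y \<alpha>)"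
  unfolding eta_def by (auto simp: max_def)

lemma ln_le_eta: "y > 0 \<Longrightarrow> ln y \<le> eta \<alpha> y"
  unfolding eta_def by auto

lemma eta_mono_alpha: "0 < \<alpha> \<Longrightarrow> \<alpha> \<le> \<beta> \<Longrightarrow> 0 \<le> y \<Longrightarrow> eta \<alpha> y \<le> eta \<beta> y"
  by (simp add: eta_eq_ln_max)

text \<open>lambda_bar_alpha is monotone in alpha, hence lambda_bar is its infimum over alpha > 0.\<close>

lemma lambda_bar_alpha_mono:
  assumes "0 < \<alpha>" "\<alpha> \<le> \<beta>"
  shows "lambda_bar_alpha f f' x \<alpha> \<le> lambda_bar_alpha f f' x \<beta>"
  unfolding lambda_bar_alpha_def
proof (intro Limsup_mono always_eventually allI)
  fix n
  have "(\<Sum>k<n. eta \<alpha> \<bar>f' ((f ^^ k) x)\<bar>) \<le> (\<Sum>k<n. eta \<beta> \<bar>f' ((f ^^ k) x)\<bar>)"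
    using assms by (intro sum_mono eta_mono_alpha) auto
  then show "ereal (1 / real n * (\<Sum>k<n. eta \<alpha> \<bar>f' ((f ^^ k) x)\<bar>))
      \<le> ereal (1 / real n * (\<Sum>k<n. eta \<beta> \<bar>f' ((f ^^ k) x)\<bar>))"
    by (simp add: divide_right_mono)
qed

lemma lambda_bar_eq_Inf: "lambda_bar f f' x = Inf (lambda_bar_alpha f f' x ` {0<..})"
  unfolding lambda_bar_def
proof (rule tendsto_Lim)
  let ?I = "Inf (lambda_bar_alpha f f' x ` {0<..})"
  show "((\<lambda>\<alpha>. lambda_bar_alpha f f' x \<alpha>) \<longlongrightarrow> ?I) (at_right 0)"
  proof (rule order_tendstoI)
    fix y assume y: "y < ?I"
    have "\<forall>\<^sub>F \<alpha> in at_right 0. (0::real) < \<alpha>" by (simp add: eventually_at_right_less)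
    then show "\<forall>\<^sub>F \<alpha> in at_right 0. y < lambda_bar_alpha f f' x \<alpha>"
      by (rule eventually_mono) (use y in \<open>auto intro: less_le_trans Inf_lower\<close>)
  next
    fix y assume "?I < y"
    then obtain \<alpha>0 where \<alpha>0: "\<alpha>0 > 0" "lambda_bar_alpha f f' x \<alpha>0 < y"
      unfolding Inf_less_iff by auto
    show "\<forall>\<^sub>F \<alpha> in at_right 0. lambda_bar_alpha f f' x \<alpha> < y"
      using eventually_at_right_real[OF \<alpha>0(1)]
    proof (rule eventually_mono)
      fix \<alpha> :: real assume "\<alpha> \<in> {0<..<\<alpha>0}"
      then have "lambda_bar_alpha f f' x \<alpha> \<le> lambda_bar_alpha f f' x \<alpha>0"
        by (intro lambda_bar_alpha_mono) auto
      then show "lambda_bar_alpha f f' x \<alpha> < y" using \<alpha>0(2) by (rule le_less_trans)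
    qed
  qed
qed simp

lemma lambda_bar_less_imp_alpha:
  assumes "lambda_bar f f' x < ereal c"
  shows "\<exists>\<alpha>>0. lambda_bar_alpha f f' x \<alpha> < ereal c"
  using assms unfolding lambda_bar_eq_Inf Inf_less_iff by auto

lemma lipschitz_of_bounded_derivative:
  fixes g g' :: "real \<Rightarrow> real"
  assumes deriv: "\<forall>y\<in>{a..b}. (g has_real_derivative g' y) (at y within {a..b})"
    and bdd: "bounded (g' ` {a..b})"
  obtains M where "M \<ge> 0" "\<forall>y\<in>{a..b}. \<forall>z\<in>{a..b}. \<bar>g y - g z\<bar> \<le> M * \<bar>y - z\<bar>"
proof -
  obtain B where B: "\<forall>z\<in>g' ` {a..b}. norm z \<le> B" using bdd unfolding bounded_iff by blast
  have "\<bar>g y - g z\<bar> \<le> max B 0 * \<bar>y - z\<bar>" if "y \<in> {a..b}" "z \<in> {a..b}" for y z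
  proof -
    have "norm (g y - g z) \<le> max B 0 * norm (y - z)"
      by (rule field_differentiable_bound[of "{a..b}"]) (use deriv B that in \<open>auto simp: le_max_iff_disj\<close>)
    then show ?thesis by simp
  qed
  then show ?thesis using that[of "max B 0"] by auto
qed

text \<open>The error analysis of the computed sequence only needs f' to be Lipschitz on D and the
  local Lipschitz estimate Lb to lie between Lloc and Lloc + K e.\<close>

locale float_iteration =
  fixes a b :: real and f f' :: "real \<Rightarrow> real" and M :: real
    and rd :: "nat \<Rightarrow> real \<Rightarrow> real" and Lb :: "real \<Rightarrow> real \<Rightarrow> real" and K x :: real
  assumes maps: "\<forall>y\<in>{a..b}. f y \<in> {a..b}"
    and deriv: "\<forall>y\<in>{a..b}. (f has_real_derivative f' y) (at y within {a..b})"
    and M: "M \<ge> 0"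
    and f'_lipschitz: "\<forall>y\<in>{a..b}. \<forall>z\<in>{a..b}. \<bar>f' y - f' z\<bar> \<le> M * \<bar>y - z\<bar>"
    and rd: "is_round_nearest rd"
    and K: "K \<ge> 0"
    and Lb: "\<forall>c\<in>{a..b}. \<forall>e\<ge>0. Lloc f' {a..b} c e \<le> Lb c e \<and> Lb c e \<le> Lloc f' {a..b} c e + K * e"
    and xD: "x \<in> {a..b}"
    and inD: "\<forall>m\<ge>1. \<forall>n. fst (comp_seq rd f Lb m x n) \<in> {a..b}"
begin

abbreviation slope :: "nat \<Rightarrow> real" where
  "slope j \<equiv> \<bar>f' ((f ^^ j) x)\<bar>"

lemma Lloc_le:
  assumes c: "c \<in> {a..b}" and e: "e \<ge> 0"
  shows "Lloc f' {a..b} c e \<le> \<bar>f' c\<bar> + M * e"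
  unfolding Lloc_def
proof (rule cSup_least)
  show "(\<lambda>y. \<bar>f' y\<bar>) ` ({c - e..c + e} \<inter> {a..b}) \<noteq> {}" using c e by auto
next
  fix t assume "t \<in> (\<lambda>y. \<bar>f' y\<bar>) ` ({c - e..c + e} \<inter> {a..b})"
  then obtain y where y: "y \<in> {c - e..c + e}" "y \<in> {a..b}" and t: "t = \<bar>f' y\<bar>" by auto
  have "\<bar>f' y - f' c\<bar> \<le> M * \<bar>y - c\<bar>" using f'_lipschitz y(2) c by blast
  also have "\<dots> \<le> M * e" using y M by (intro mult_left_mono) auto
  finally show "t \<le> \<bar>f' c\<bar> + M * e" using t by linarith
qed

lemma Lloc_ge:
  assumes c: "c \<in> {a..b}" and e: "e \<ge> 0" and y: "y \<in> {c - e..c + e} \<inter> {a..b}"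
  shows "\<bar>f' y\<bar> \<le> Lloc f' {a..b} c e"
  unfolding Lloc_def
proof (rule cSup_upper)
  show "\<bar>f' y\<bar> \<in> (\<lambda>y. \<bar>f' y\<bar>) ` ({c - e..c + e} \<inter> {a..b})" using y by auto
  show "bdd_above ((\<lambda>y. \<bar>f' y\<bar>) ` ({c - e..c + e} \<inter> {a..b}))"
  proof (rule bdd_aboveI2)
    fix z assume z: "z \<in> {c - e..c + e} \<inter> {a..b}"
    have "\<bar>f' z - f' c\<bar> \<le> M * \<bar>z - c\<bar>" using f'_lipschitz z c by blast
    also have "\<dots> \<le> M * e" using z M by (intro mult_left_mono) auto
    finally show "\<bar>f' z\<bar> \<le> \<bar>f' c\<bar> + M * e" by linarith
  qed
qed

lemma f_lipschitz_window:
  assumes c: "c \<in> {a..b}" and e: "e \<ge> 0"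
    and y: "y \<in> {c - e..c + e} \<inter> {a..b}" and z: "z \<in> {c - e..c + e} \<inter> {a..b}"
  shows "\<bar>f y - f z\<bar> \<le> Lloc f' {a..b} c e * \<bar>y - z\<bar>"
proof -
  let ?S = "{c - e..c + e} \<inter> {a..b}"
  have "norm (f y - f z) \<le> Lloc f' {a..b} c e * norm (y - z)"
  proof (rule field_differentiable_bound[OF _ _ _ y z])
    show "convex ?S" by (intro convex_Int) auto
    show "(f has_field_derivative f' w) (at w within ?S)" if "w \<in> ?S" for w
      using deriv that by (blast intro: DERIV_subset)
    show "norm (f' w) \<le> Lloc f' {a..b} c e" if "w \<in> ?S" for w
      using Lloc_ge[OF c e that] by simp
  qed
  then show ?thesis by simp
qed

lemma orbit_in_D: "(f ^^ n) x \<in> {a..b}"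
  by (induction n) (use xD maps in auto)

definition xhat :: "nat \<Rightarrow> nat \<Rightarrow> real" where
  "xhat m n = fst (comp_seq rd f Lb m x n)"

definition ebar :: "nat \<Rightarrow> nat \<Rightarrow> real" where
  "ebar m n = snd (comp_seq rd f Lb m x n)"

lemma xhat_0: "xhat m 0 = rd m x"
  and xhat_Suc: "xhat m (Suc n) = rd m (f (xhat m n))"
  and ebar_0: "ebar m 0 = inverse (2 ^ m) * \<bar>rd m x\<bar>"
  and ebar_Suc: "ebar m (Suc n) = Lb (xhat m n) (ebar m n) * ebar m n + inverse (2 ^ m) * \<bar>xhat m (Suc n)\<bar>"
  unfolding xhat_def ebar_def by (simp_all add: Let_def)

lemma xhat_in_D: "m \<ge> 1 \<Longrightarrow> xhat m n \<in> {a..b}"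
  using inD unfolding xhat_def by auto

lemma ebar_encloses:
  assumes m: "m \<ge> 1"
  shows "0 \<le> ebar m n \<and> \<bar>xhat m n - (f ^^ n) x\<bar> \<le> ebar m n"
proof (induction n)
  case 0
  show ?case using round_nearest_rel_error[OF rd m, of x] by (simp add: xhat_0 ebar_0)
next
  case (Suc n)
  let ?c = "xhat m n" and ?e = "ebar m n" and ?y = "(f ^^ n) x"
  have c: "?c \<in> {a..b}" using xhat_in_D[OF m] .
  have e: "?e \<ge> 0" and cy: "\<bar>?c - ?y\<bar> \<le> ?e" using Suc by auto
  have L0: "0 \<le> Lloc f' {a..b} ?c ?e" using Lloc_ge[OF c e, of ?c] c e by auto
  have LLb: "Lloc f' {a..b} ?c ?e \<le> Lb ?c ?e" using Lb c e by auto
  have "?c \<in> {?c - ?e..?c + ?e} \<inter> {a..b}" "?y \<in> {?c - ?e..?c + ?e} \<inter> {a..b}"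
    using c e cy orbit_in_D[of n] by auto
  then have "\<bar>f ?c - f ?y\<bar> \<le> Lloc f' {a..b} ?c ?e * \<bar>?c - ?y\<bar>"
    by (rule f_lipschitz_window[OF c e])
  also have "\<dots> \<le> Lb ?c ?e * ?e" using LLb cy L0 e by (intro mult_mono) auto
  finally have propagated: "\<bar>f ?c - f ?y\<bar> \<le> Lb ?c ?e * ?e" .
  have rounded: "\<bar>xhat m (Suc n) - f ?c\<bar> \<le> inverse (2 ^ m) * \<bar>xhat m (Suc n)\<bar>"
    unfolding xhat_Suc using round_nearest_rel_error[OF rd m] .
  have "0 \<le> Lb ?c ?e * ?e" using L0 LLb e by simp
  then show ?case using propagated rounded by (simp add: ebar_Suc)
qed

definition R :: real where "R = max \<bar>a\<bar> \<bar>b\<bar>"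

definition C :: real where "C = 2 * M + K"

lemma R_bound: "y \<in> {a..b} \<Longrightarrow> \<bar>y\<bar> \<le> R"
  unfolding R_def by auto

lemma R_nonneg: "R \<ge> 0" and C_nonneg: "C \<ge> 0"
  unfolding R_def C_def using M K by auto

lemma ebar_0_le: "m \<ge> 1 \<Longrightarrow> ebar m 0 \<le> inverse (2 ^ m) * R"
  using R_bound[OF xhat_in_D[of m 0]] by (simp add: ebar_0 xhat_0)

lemma ebar_step:
  assumes m: "m \<ge> 1"
  shows "ebar m (Suc n) \<le> (slope n + C * ebar m n) * ebar m n + inverse (2 ^ m) * R"
proof -
  let ?c = "xhat m n" and ?e = "ebar m n" and ?y = "(f ^^ n) x"
  have c: "?c \<in> {a..b}" using xhat_in_D[OF m] .
  have e: "?e \<ge> 0" and cy: "\<bar>?c - ?y\<bar> \<le> ?e" using ebar_encloses[OF m] by auto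
  have "\<bar>f' ?c - f' ?y\<bar> \<le> M * ?e"
    using f'_lipschitz c orbit_in_D[of n] cy M by (meson mult_left_mono order_trans)
  then have "Lb ?c ?e \<le> slope n + C * ?e"
    using Lb Lloc_le[OF c e] c e unfolding C_def by (fastforce simp: algebra_simps)
  then have "Lb ?c ?e * ?e \<le> (slope n + C * ?e) * ?e" using e by (rule mult_right_mono)
  moreover have "inverse (2 ^ m) * \<bar>xhat m (Suc n)\<bar> \<le> inverse (2 ^ m) * R"
    using R_bound[OF xhat_in_D[OF m]] by (intro mult_left_mono) auto
  ultimately show ?thesis unfolding ebar_Suc by linarith
qed

text \<open>Error bound without sign information on the slopes: while C ebar \<le> eps alpha, the factor
  slope + C ebar is at most max(slope, alpha) (1 + eps), whose logarithm is eta + ln (1 + eps).\<close>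

lemma error_bound_expanding:
  fixes \<alpha> \<epsilon> \<beta> B :: real and m N :: nat
  assumes m: "m \<ge> 1" and \<alpha>: "\<alpha> > 0" and \<epsilon>: "\<epsilon> > 0" and small: "C * \<beta> \<le> \<epsilon> * \<alpha>"
    and window: "\<And>k n. k \<le> n \<Longrightarrow> n \<le> N \<Longrightarrow> (\<Sum>j\<in>{k..<n}. eta \<alpha> (slope j)) \<le> B"
    and budget: "inverse (2 ^ m) * R * (real N + 1) * exp (B + real N * \<epsilon>) \<le> \<beta>"
  shows "\<And>n. n \<le> N \<Longrightarrow> ebar m n \<le> \<beta>"
proof (rule bootstrap_bound[where h = "\<lambda>j. max (slope j) \<alpha> * (1 + \<epsilon>)"])
  show "ebar m 0 \<le> inverse (2 ^ m) * R" by (rule ebar_0_le[OF m])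
  show "\<And>j. 0 \<le> ebar m j" using ebar_encloses[OF m] by blast
  show "\<And>j. 0 < max (slope j) \<alpha> * (1 + \<epsilon>)" using \<alpha> \<epsilon> by (simp add: max.strict_coboundedI2)
  show "inverse (2 ^ m) * R * (real N + 1) * exp (B + real N * \<epsilon>) \<le> \<beta>" by (rule budget)
next
  fix j assume "ebar m j \<le> \<beta>"
  then have "C * ebar m j \<le> C * \<beta>" using C_nonneg by (rule mult_left_mono)
  also have "\<dots> \<le> \<epsilon> * \<alpha>" by (rule small)
  also have "\<dots> \<le> \<epsilon> * max (slope j) \<alpha>" using \<epsilon> by (intro mult_left_mono) auto
  finally have "C * ebar m j \<le> \<epsilon> * max (slope j) \<alpha>" .
  then have "slope j + C * ebar m j \<le> max (slope j) \<alpha> * (1 + \<epsilon>)"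
    by (simp add: algebra_simps)
  then have "(slope j + C * ebar m j) * ebar m j \<le> max (slope j) \<alpha> * (1 + \<epsilon>) * ebar m j"
    using ebar_encloses[OF m] by (intro mult_right_mono) auto
  then show "ebar m (Suc j) \<le> max (slope j) \<alpha> * (1 + \<epsilon>) * ebar m j + inverse (2 ^ m) * R"
    using ebar_step[OF m, of j] by linarith
next
  fix k n assume kn: "k \<le> n" "n \<le> N"
  have "ln (max (slope j) \<alpha> * (1 + \<epsilon>)) = eta \<alpha> (slope j) + ln (1 + \<epsilon>)" for j
    using \<alpha> \<epsilon> by (simp add: ln_mult eta_eq_ln_max max.strict_coboundedI2)
  then have "(\<Sum>j\<in>{k..<n}. ln (max (slope j) \<alpha> * (1 + \<epsilon>)))
      = (\<Sum>j\<in>{k..<n}. eta \<alpha> (slope j)) + real (n - k) * ln (1 + \<epsilon>)"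
    by (simp add: sum.distrib)
  also have "\<dots> \<le> B + real N * \<epsilon>"
  proof (rule add_mono)
    show "(\<Sum>j\<in>{k..<n}. eta \<alpha> (slope j)) \<le> B" by (rule window[OF kn])
    have "real (n - k) * ln (1 + \<epsilon>) \<le> real (n - k) * \<epsilon>"
      using \<epsilon> by (intro mult_left_mono ln_add_one_self_le_self) auto
    also have "\<dots> \<le> real N * \<epsilon>" using kn \<epsilon> by (intro mult_right_mono) auto
    finally show "real (n - k) * ln (1 + \<epsilon>) \<le> real N * \<epsilon>" .
  qed
  finally show "(\<Sum>j\<in>{k..<n}. ln (max (slope j) \<alpha> * (1 + \<epsilon>))) \<le> B + real N * \<epsilon>" .
qed

text \<open>Error bound for nonvanishing slopes: while ebar \<le> 2^-m V the quadratic term is at most 2^-m,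
  so the recursion is linear with the true slopes.\<close>

lemma error_bound_contracting:
  fixes V B :: real and m N :: nat
  assumes m: "m \<ge> 1" and small: "C * inverse (2 ^ m) * V * V \<le> 1"
    and nonzero: "\<And>j. f' ((f ^^ j) x) \<noteq> 0"
    and window: "\<And>k n. k \<le> n \<Longrightarrow> n \<le> N \<Longrightarrow> (\<Sum>j\<in>{k..<n}. ln (slope j)) \<le> B"
    and budget: "(R + 1) * (real N + 1) * exp B \<le> V"
  shows "\<And>n. n \<le> N \<Longrightarrow> ebar m n \<le> inverse (2 ^ m) * V"
proof (rule bootstrap_bound[where h = slope and c = "inverse (2 ^ m) * (R + 1)"])
  let ?u = "inverse ((2::real) ^ m)"
  show "ebar m 0 \<le> ?u * (R + 1)"
  proof -
    have "?u * R \<le> ?u * (R + 1)" by (intro mult_left_mono) auto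
    then show ?thesis using ebar_0_le[OF m] by linarith
  qed
  show "\<And>j. 0 \<le> ebar m j" using ebar_encloses[OF m] by blast
  show "\<And>j. 0 < slope j" using nonzero by simp
  show "\<And>k n. k \<le> n \<Longrightarrow> n \<le> N \<Longrightarrow> (\<Sum>j\<in>{k..<n}. ln (slope j)) \<le> B" by (rule window)
  show "?u * (R + 1) * (real N + 1) * exp B \<le> ?u * V"
    using budget by (simp add: mult.assoc mult_left_mono)
next
  let ?u = "inverse ((2::real) ^ m)"
  fix j assume small_j: "ebar m j \<le> ?u * V"
  have e: "0 \<le> ebar m j" using ebar_encloses[OF m] by blast
  have "C * ebar m j * ebar m j \<le> C * (?u * V) * (?u * V)"
    using small_j e C_nonneg by (intro mult_mono) (auto intro: mult_nonneg_nonneg)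
  also have "\<dots> = ?u * (C * ?u * V * V)" by (simp add: algebra_simps)
  also have "\<dots> \<le> ?u" using small by (simp add: mult_left_le)
  finally show "ebar m (Suc j) \<le> slope j * ebar m j + ?u * (R + 1)"
    using ebar_step[OF m, of j] by (simp add: algebra_simps)
qed

lemma m_min_le:
  assumes m: "m \<ge> 1" and nz: "\<forall>n. (f ^^ n) x \<noteq> 0"
    and small: "\<And>n. n \<le> N \<Longrightarrow> ebar m n \<le> tolerance p * orbit_min f x N / 2"
  shows "m_min rd f Lb x N p \<le> m"
  unfolding m_min_def
proof (rule Least_le, intro conjI m allI impI)
  fix n assume n: "n \<le> N"
  let ?\<tau> = "tolerance p" and ?\<mu> = "orbit_min f x N"
  have \<tau>: "0 < ?\<tau>" "?\<tau> \<le> 1" by (rule tolerance_pos, rule tolerance_le_one)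
  have \<mu>: "0 < ?\<mu>" "?\<mu> \<le> \<bar>(f ^^ n) x\<bar>" using orbit_min_pos[OF nz] orbit_min_le[OF n] by auto
  have e: "ebar m n \<le> ?\<tau> * ?\<mu> / 2" using small[OF n] .
  have "\<bar>xhat m n - (f ^^ n) x\<bar> \<le> ebar m n" using ebar_encloses[OF m] by blast
  moreover have "?\<tau> * ?\<mu> \<le> ?\<mu>" using \<tau> \<mu> by (simp add: mult_left_le_one_le)
  ultimately have "?\<mu> / 2 \<le> \<bar>xhat m n\<bar>" using e \<mu> by linarith
  then have "?\<tau> * ?\<mu> / 2 \<le> ?\<tau> * \<bar>xhat m n\<bar>" using \<tau> by (simp add: mult_left_mono)
  then show "snd (comp_seq rd f Lb m x n) \<le> 10 powr - real_of_int p / (1 + 10 powr - real_of_int p)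
      * \<bar>fst (comp_seq rd f Lb m x n)\<bar>"
    using e unfolding ebar_def xhat_def tolerance_def by linarith
qed

lemma sigma_le_rate:
  assumes q: "q > 0" and nz: "\<forall>n. (f ^^ n) x \<noteq> 0"
    and sufficient: "\<forall>\<^sub>F N in sequentially. \<forall>m\<ge>1. inverse (2 ^ m) \<le> exp (- (real N * q * ln 2)) \<longrightarrow>
        (\<forall>n\<le>N. ebar m n \<le> tolerance p * orbit_min f x N / 2)"
  shows "sigma rd f Lb x p \<le> ereal q"
proof -
  have "\<forall>\<^sub>F N in sequentially. ereal (real (m_min rd f Lb x N p) / real N) \<le> ereal (q + 1 / real N)"
    using sufficient eventually_ge_at_top[of 1]
  proof eventually_elim
    case (elim N)
    define m where "m = nat \<lceil>real N * q\<rceil>"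
    have "0 < real N * q" using elim(2) q by simp
    then have m1: "m \<ge> 1" and mq: "real m \<le> real N * q + 1"
      unfolding m_def by (auto simp: le_nat_iff of_nat_ceiling)
    have "m_min rd f Lb x N p \<le> m"
      using m_min_le[OF m1 nz] elim(1) m1 inverse_pow2_ceiling_le[of "real N * q"] unfolding m_def by blast
    then have "real (m_min rd f Lb x N p) \<le> real N * q + 1" using mq by linarith
    then have "real (m_min rd f Lb x N p) / real N \<le> (real N * q + 1) / real N"
      by (simp add: divide_right_mono)
    also have "\<dots> = q + 1 / real N" using elim(2) by (simp add: field_simps)
    finally show ?case by simp
  qed
  then have "sigma rd f Lb x p \<le> limsup (\<lambda>N. ereal (q + 1 / real N))"
    unfolding sigma_def by (rule Limsup_mono)
  also have "\<dots> = ereal q"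
    by (intro lim_imp_Limsup) (auto intro!: tendsto_eq_intros lim_inverse_n')
  finally show ?thesis .
qed

end

locale lyapunov_orbit = float_iteration +
  fixes l :: real
  assumes orbit_nonzero: "\<forall>n. (f ^^ n) x \<noteq> 0"
    and orbit_min_rate: "(\<lambda>N. log 2 (orbit_min f x N) / real N) \<longlonglongrightarrow> 0"
    and slope_nonzero: "\<And>j. f' ((f ^^ j) x) \<noteq> 0"
    and lyapunov_limit: "(\<lambda>n. (1 / real n) * (\<Sum>k<n. ln \<bar>f' ((f ^^ k) x)\<bar>)) \<longlonglongrightarrow> l"
begin

lemma contracting_at:
  fixes \<kappa> K1 :: real and m N :: nat
  assumes neg: "l < 0" and \<kappa>: "\<kappa> > 0"
    and K1: "\<forall>n. real n * (l - \<kappa> / 16) - K1 \<le> (\<Sum>j<n. ln (slope j))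
               \<and> (\<Sum>j<n. ln (slope j)) \<le> real n * (l + \<kappa> / 16) + K1"
    and m: "m \<ge> 1" and u: "inverse (2 ^ m) \<le> exp (- (\<kappa> * real N))"
    and large: "C * (real N + 1) \<le> exp (\<kappa> / 2 * real N)"
      "(R + 1) * exp (2 * K1) * (real N + 1) \<le> exp (\<kappa> / 8 * real N)"
      "2 / tolerance p * (real N + 1) \<le> exp (\<kappa> / 2 * real N)"
    and \<mu>: "exp (- (\<kappa> / 4 * real N)) \<le> orbit_min f x N"
  shows "\<forall>n\<le>N. ebar m n \<le> tolerance p * orbit_min f x N / 2"
proof (intro allI impI)
  fix n assume n: "n \<le> N"
  let ?u = "inverse ((2::real) ^ m)" and ?\<tau> = "tolerance p"
  define V where "V = exp (\<kappa> / 4 * real N)"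
  have window: "(\<Sum>j\<in>{k..<n}. ln (slope j)) \<le> \<kappa> / 8 * real N + 2 * K1"
    if "k \<le> n" "n \<le> N" for k n
    using window_sum_le_of_nonpositive_rate[of l "\<kappa> / 16" K1 "\<lambda>j. ln (slope j)", OF _ _ _ that]
      neg \<kappa> K1 by simp
  have \<tau>: "0 < ?\<tau>" by (rule tolerance_pos)
  have N1: "1 \<le> real N + 1" by simp
  have small: "C * ?u * V * V \<le> 1"
  proof -
    have "C \<le> exp (\<kappa> / 2 * real N)"
      using large(1) C_nonneg mult_left_mono[OF N1 C_nonneg] by linarith
    then have "C * ?u * V * V \<le> exp (\<kappa> / 2 * real N) * exp (- (\<kappa> * real N)) * V * V"
      using u C_nonneg unfolding V_def by (intro mult_right_mono mult_mono) auto
    also have "\<dots> = exp (\<kappa> / 2 * real N + - (\<kappa> * real N) + \<kappa> / 4 * real N + \<kappa> / 4 * real N)"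
      unfolding V_def by (simp only: mult_exp_exp)
    also have "\<dots> = 1" by simp
    finally show ?thesis .
  qed
  have budget: "(R + 1) * (real N + 1) * exp (\<kappa> / 8 * real N + 2 * K1) \<le> V"
  proof -
    have "(R + 1) * (real N + 1) * exp (\<kappa> / 8 * real N + 2 * K1)
        = (R + 1) * exp (2 * K1) * (real N + 1) * exp (\<kappa> / 8 * real N)"
      by (simp add: exp_add)
    also have "\<dots> \<le> exp (\<kappa> / 8 * real N) * exp (\<kappa> / 8 * real N)"
      using large(2) by (intro mult_right_mono) auto
    also have "\<dots> = V" unfolding V_def by (simp add: mult_exp_exp)
    finally show ?thesis .
  qed
  have "ebar m n \<le> ?u * V"
    by (rule error_bound_contracting[OF m small slope_nonzero window budget n])
  also have "\<dots> \<le> exp (- (\<kappa> * real N)) * V" using u unfolding V_def by (simp add: mult_right_mono)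
  also have "\<dots> = exp (- (\<kappa> / 2 * real N)) * exp (- (\<kappa> / 4 * real N))"
    unfolding V_def by (simp add: mult_exp_exp)
  also have "\<dots> \<le> ?\<tau> / 2 * orbit_min f x N"
  proof (rule mult_mono)
    have "2 / ?\<tau> \<le> exp (\<kappa> / 2 * real N)"
      using large(3) mult_left_mono[OF N1, of "2 / ?\<tau>"] \<tau> by simp
    then show "exp (- (\<kappa> / 2 * real N)) \<le> ?\<tau> / 2"
      using \<tau> by (simp add: exp_minus divide_le_eq field_simps)
  qed (use \<mu> \<tau> in auto)
  finally show "ebar m n \<le> ?\<tau> * orbit_min f x N / 2" by simp
qed

lemma sigma_le_negative:
  assumes neg: "l < 0" and q: "q > 0"
  shows "sigma rd f Lb x p \<le> ereal q"
proof (rule sigma_le_rate[OF q orbit_nonzero])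
  define \<kappa> where "\<kappa> = q * ln 2"
  have \<kappa>: "\<kappa> > 0" unfolding \<kappa>_def using q by simp
  obtain K1 where K1: "\<forall>n. real n * (l - \<kappa> / 16) - K1 \<le> (\<Sum>j<n. ln (slope j))
      \<and> (\<Sum>j<n. ln (slope j)) \<le> real n * (l + \<kappa> / 16) + K1"
    using average_limit_linear_bounds[OF lyapunov_limit, of "\<kappa> / 16"] \<kappa> by auto
  have "\<forall>\<^sub>F N in sequentially. C * (real N + 1) \<le> exp (\<kappa> / 2 * real N)
      \<and> (R + 1) * exp (2 * K1) * (real N + 1) \<le> exp (\<kappa> / 8 * real N)
      \<and> 2 / tolerance p * (real N + 1) \<le> exp (\<kappa> / 2 * real N)
      \<and> exp (- (\<kappa> / 4 * real N)) \<le> orbit_min f x N"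
    using \<kappa> by (intro eventually_conj eventually_linear_le_exp
        orbit_min_eventually_ge[OF orbit_nonzero orbit_min_rate]) auto
  then show "\<forall>\<^sub>F N in sequentially. \<forall>m\<ge>1. inverse (2 ^ m) \<le> exp (- (real N * q * ln 2)) \<longrightarrow>
      (\<forall>n\<le>N. ebar m n \<le> tolerance p * orbit_min f x N / 2)"
  proof eventually_elim
    case (elim N)
    show ?case
    proof (rule allI, intro impI)
      fix m :: nat assume "m \<ge> 1" "inverse (2 ^ m) \<le> exp (- (real N * q * ln 2))"
      then show "\<forall>n\<le>N. ebar m n \<le> tolerance p * orbit_min f x N / 2"
        using elim by (intro contracting_at[OF neg \<kappa> K1]) (auto simp: \<kappa>_def mult_ac)
    qed
  qed
qed

lemma expanding_at:
  fixes \<alpha> \<epsilon> r K0 K1 :: real and m N :: nat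
  assumes \<alpha>: "\<alpha> > 0" and \<epsilon>: "\<epsilon> > 0" and r: "r \<ge> 0"
    and T: "\<forall>n. (\<Sum>j<n. eta \<alpha> (slope j)) \<le> real n * r + K0"
    and S: "\<forall>k. - K1 - real k * \<epsilon> \<le> (\<Sum>j<k. ln (slope j))"
    and small: "C * tolerance p * R \<le> \<epsilon> * \<alpha>"
    and m: "m \<ge> 1" and u: "inverse (2 ^ m) \<le> exp (- (real N * (r + 4 * \<epsilon>)))"
    and large: "2 * R * exp (K0 + K1) / tolerance p * (real N + 1) \<le> exp (\<epsilon> * real N)"
    and \<mu>: "exp (- (\<epsilon> * real N)) \<le> orbit_min f x N"
  shows "\<forall>n\<le>N. ebar m n \<le> tolerance p * orbit_min f x N / 2"
proof (intro allI impI)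
  fix n assume n: "n \<le> N"
  let ?\<tau> = "tolerance p" and ?\<mu> = "orbit_min f x N"
  have \<tau>: "0 < ?\<tau>" by (rule tolerance_pos)
  have \<mu>_pos: "0 < ?\<mu>" by (rule orbit_min_pos[OF orbit_nonzero])
  have "?\<mu> \<le> R" using orbit_min_le[of 0 N f x] R_bound[OF xD] by simp
  then have "?\<tau> * ?\<mu> \<le> ?\<tau> * R" using \<tau> by (simp add: mult_left_mono)
  moreover have "0 < ?\<tau> * ?\<mu>" using \<tau> \<mu>_pos by simp
  ultimately have "?\<tau> * ?\<mu> / 2 \<le> ?\<tau> * R" by linarith
  then have "C * (?\<tau> * ?\<mu> / 2) \<le> C * ?\<tau> * R"
    using mult_left_mono[OF _ C_nonneg] by (simp add: mult.assoc)
  then have small_bound: "C * (?\<tau> * ?\<mu> / 2) \<le> \<epsilon> * \<alpha>" using small by linarith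
  have window: "(\<Sum>j\<in>{k..<n}. eta \<alpha> (slope j)) \<le> real N * (r + \<epsilon>) + K0 + K1"
    if "k \<le> n" "n \<le> N" for k n
    using slope_nonzero \<epsilon> by (intro window_sum_le_of_dominating[OF _ r _ T S that] ln_le_eta) auto
  have budget: "inverse (2 ^ m) * R * (real N + 1) * exp (real N * (r + \<epsilon>) + K0 + K1 + real N * \<epsilon>)
      \<le> ?\<tau> * ?\<mu> / 2"
    using u R_nonneg \<tau> large \<mu> by (intro expanding_budget) auto
  show "ebar m n \<le> ?\<tau> * ?\<mu> / 2"
    by (rule error_bound_expanding[OF m \<alpha> \<epsilon> small_bound window budget n])
qed

lemma sigma_le_positive_at:
  fixes \<alpha> \<epsilon> r K0 K1 :: real
  assumes \<alpha>: "\<alpha> > 0" and \<epsilon>: "\<epsilon> > 0" and r: "r \<ge> 0"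
    and T: "\<forall>n. (\<Sum>j<n. eta \<alpha> (slope j)) \<le> real n * r + K0"
    and S: "\<forall>k. - K1 - real k * \<epsilon> \<le> (\<Sum>j<k. ln (slope j))"
    and small: "C * tolerance p * R \<le> \<epsilon> * \<alpha>"
  shows "sigma rd f Lb x p \<le> ereal ((r + 4 * \<epsilon>) / ln 2)"
proof (rule sigma_le_rate[OF _ orbit_nonzero])
  show "(r + 4 * \<epsilon>) / ln 2 > 0" using r \<epsilon> by simp
  have "\<forall>\<^sub>F N in sequentially. 2 * R * exp (K0 + K1) / tolerance p * (real N + 1) \<le> exp (\<epsilon> * real N)
      \<and> exp (- (\<epsilon> * real N)) \<le> orbit_min f x N"
    using \<epsilon> by (intro eventually_conj eventually_linear_le_exp
        orbit_min_eventually_ge[OF orbit_nonzero orbit_min_rate])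
  then show "\<forall>\<^sub>F N in sequentially. \<forall>m\<ge>1. inverse (2 ^ m) \<le> exp (- (real N * ((r + 4 * \<epsilon>) / ln 2) * ln 2))
      \<longrightarrow> (\<forall>n\<le>N. ebar m n \<le> tolerance p * orbit_min f x N / 2)"
  proof eventually_elim
    case (elim N)
    show ?case
    proof (rule allI, intro impI)
      fix m :: nat assume "m \<ge> 1" "inverse (2 ^ m) \<le> exp (- (real N * ((r + 4 * \<epsilon>) / ln 2) * ln 2))"
      then show "\<forall>n\<le>N. ebar m n \<le> tolerance p * orbit_min f x N / 2"
        using elim by (intro expanding_at[OF \<alpha> \<epsilon> r T S small]) auto
    qed
  qed
qed

lemma sigma_le_positive:
  assumes pos: "l \<ge> 0" and ll: "ll \<ge> 0" "lambda_bar f f' x \<le> ereal ll" and \<epsilon>: "\<epsilon> > 0"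
  shows "\<exists>p0. \<forall>p\<ge>p0. sigma rd f Lb x p \<le> ereal (ll / ln 2 + \<epsilon>)"
proof -
  define \<epsilon>1 where "\<epsilon>1 = \<epsilon> * ln 2 / 10"
  have \<epsilon>1: "\<epsilon>1 > 0" unfolding \<epsilon>1_def using \<epsilon> by simp
  have "lambda_bar f f' x < ereal (ll + \<epsilon>1)" using ll(2) \<epsilon>1 by (simp add: le_less_trans)
  then obtain \<alpha> where \<alpha>: "\<alpha> > 0" "lambda_bar_alpha f f' x \<alpha> < ereal (ll + \<epsilon>1)"
    using lambda_bar_less_imp_alpha by blast
  obtain K0 where T: "\<forall>n. (\<Sum>j<n. eta \<alpha> (slope j)) \<le> real n * (ll + \<epsilon>1) + K0"
    using limsup_average_linear_bound[OF \<alpha>(2)[unfolded lambda_bar_alpha_def]] by blast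
  obtain K1 where K1: "\<forall>n. real n * (l - \<epsilon>1) - K1 \<le> (\<Sum>j<n. ln (slope j))"
    using average_limit_linear_bounds[OF lyapunov_limit \<epsilon>1] by blast
  have S: "\<forall>k. - K1 - real k * \<epsilon>1 \<le> (\<Sum>j<k. ln (slope j))"
  proof
    fix k
    have "0 \<le> real k * l" using pos by simp
    then show "- K1 - real k * \<epsilon>1 \<le> (\<Sum>j<k. ln (slope j))"
      using K1[rule_format, of k] by (simp add: algebra_simps)
  qed
  have "\<epsilon>1 * \<alpha> / (C * R + 1) > 0" using \<epsilon>1 \<alpha>(1) C_nonneg R_nonneg by (simp add: add_nonneg_pos)
  then obtain p0 where p0: "\<forall>p\<ge>p0. tolerance p \<le> \<epsilon>1 * \<alpha> / (C * R + 1)"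
    using tolerance_eventually_le by blast
  show ?thesis
  proof (intro exI[of _ p0] allI impI)
    fix p assume "p \<ge> p0"
    then have "(C * R + 1) * tolerance p \<le> \<epsilon>1 * \<alpha>"
      using p0 C_nonneg R_nonneg by (simp add: le_divide_eq mult.commute add_nonneg_pos)
    then have "C * tolerance p * R \<le> \<epsilon>1 * \<alpha>" using tolerance_pos[of p] by (simp add: algebra_simps)
    then have "sigma rd f Lb x p \<le> ereal ((ll + \<epsilon>1 + 4 * \<epsilon>1) / ln 2)"
      using \<alpha>(1) \<epsilon>1 ll(1) T S by (intro sigma_le_positive_at) auto
    also have "(ll + \<epsilon>1 + 4 * \<epsilon>1) / ln 2 \<le> ll / ln 2 + \<epsilon>"
      using \<epsilon> unfolding \<epsilon>1_def by (simp add: field_simps)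
    finally show "sigma rd f Lb x p \<le> ereal (ll / ln 2 + \<epsilon>)" by simp
  qed
qed

lemma sigma_eventually_le:
  assumes ll: "ll \<ge> 0" "lambda_bar f f' x \<le> ereal ll" and \<epsilon>: "\<epsilon> > 0"
  shows "\<exists>p0. \<forall>p\<ge>p0. sigma rd f Lb x p \<le> ereal (ll / ln 2 + \<epsilon>)"
proof (cases "l < 0")
  case True
  have "sigma rd f Lb x p \<le> ereal (ll / ln 2 + \<epsilon>)" for p
  proof -
    have "sigma rd f Lb x p \<le> ereal \<epsilon>" by (rule sigma_le_negative[OF True \<epsilon>])
    also have "\<dots> \<le> ereal (ll / ln 2 + \<epsilon>)" using ll(1) by simp
    finally show ?thesis .
  qed
  then show ?thesis by blast
next
  case False
  then show ?thesis using sigma_le_positive[OF _ ll \<epsilon>] by simp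
qed

end

theorem mainTheorem10:
  fixes a b :: real and f f' f'' :: "real \<Rightarrow> real"
    and rd :: "nat \<Rightarrow> real \<Rightarrow> real" and Lb :: "real \<Rightarrow> real \<Rightarrow> real"
    and Lmax K x :: real
  assumes ab: "a < b"
    and maps: "\<forall>y\<in>{a..b}. f y \<in> {a..b}"
    and d1: "\<forall>y\<in>{a..b}. (f has_real_derivative f' y) (at y within {a..b})"
    and d2: "\<forall>y\<in>{a..b}. (f' has_real_derivative f'' y) (at y within {a..b})"
    and d2cont: "continuous_on {a..b} f''"
    and d2bdd: "bounded (f'' ` {a..b})"
    and rd: "is_round_nearest rd"
    and K: "K \<ge> 0" and Lmax: "Lmax \<ge> 0"
    and Lb: "\<forall>c\<in>{a..b}. \<forall>e\<ge>0. Lloc f' {a..b} c e \<le> Lb c e \<and>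
               Lb c e \<le> min Lmax (Lloc f' {a..b} c e + K * e)"
    and xrat: "x \<in> \<rat>" and xD: "x \<in> {a..b}"
    and inD: "\<forall>m\<ge>1. \<forall>n. fst (comp_seq rd f Lb m x n) \<in> {a..b}"
    and nz: "\<forall>n. (f ^^ n) x \<noteq> 0"
    and minlim: "(\<lambda>N. log 2 (Min ((\<lambda>n. \<bar>(f ^^ n) x\<bar>) ` {0..N})) / real N) \<longlonglongrightarrow> 0"
    and lyap: "lyapunov_exists f f' x"
  shows "\<forall>\<epsilon>>0. \<exists>p0::int. \<forall>p\<ge>p0.
           sigma rd f Lb x p \<le> max 0 (lambda_bar f f' x) / ereal (ln 2) + ereal \<epsilon>"
proof (intro allI impI)
  fix \<epsilon> :: real assume \<epsilon>: "\<epsilon> > 0"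
  obtain M where M: "M \<ge> 0" "\<forall>y\<in>{a..b}. \<forall>z\<in>{a..b}. \<bar>f' y - f' z\<bar> \<le> M * \<bar>y - z\<bar>"
    using lipschitz_of_bounded_derivative[OF d2 d2bdd] by blast
  obtain l where l: "(\<lambda>n. (1 / real n) * (\<Sum>k<n. ln \<bar>f' ((f ^^ k) x)\<bar>)) \<longlonglongrightarrow> l"
    using lyap unfolding lyapunov_exists_def by blast
  interpret lyapunov_orbit a b f f' M rd Lb K x l
    using maps d1 M rd K Lb xD inD nz minlim lyap l
    by unfold_locales (auto simp: orbit_min_def lyapunov_exists_def)
  show "\<exists>p0::int. \<forall>p\<ge>p0. sigma rd f Lb x p \<le> max 0 (lambda_bar f f' x) / ereal (ln 2) + ereal \<epsilon>"
  proof (cases "max 0 (lambda_bar f f' x)")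
    case (real ll)
    have "0 \<le> max 0 (lambda_bar f f' x)" "lambda_bar f f' x \<le> max 0 (lambda_bar f f' x)" by simp_all
    then have "0 \<le> ll" "lambda_bar f f' x \<le> ereal ll" using real by simp_all
    then show ?thesis using sigma_eventually_le[OF _ _ \<epsilon>] real by simp
  qed simp_all
qed

end
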